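(* Let $K_n$ be the complete graph on nodes $v_1,\dots,v_n$ with threshold function $t$ satisfying $1\le t(v)\le n-1$, let $1\le m\le n$, let $K_m$ be the subgraph induced by $V_m=\{v_1,\dots,v_m\}$, and suppose $t(v_1)\le t(v_2)\le\cdots\le t(v_m)$. Let $\lambda\ge1$ and $1\le \ell\le\lambda$. If there exists an $\ell$-optimal incentive function for $K_m$ under which the set of nodes influenced by the end of round $\ell-1$ has exactly $k<m$ elements, then there exists an $\ell$-optimal incentive function for $K_m$ under which $\{v_1,\dots,v_k\}$ are influenced by the end of round $\ell-1$.
   Context: Influence model on a graph $G=(V,E)$ with thresholds $t:V\to\{1,2,\dots\}$: an incentive function is $p:V\to\{0,1,2,\dots\}$ with $0\le p(v)\le t(v)$, of cost $\sum_v p(v)$. The influence process in $G$: $\mathsf{Influenced}[p,0]=\{v: p(v)=t(v)\}$ and, for $r>0$, $\mathsf{Influenced}[p,r]=\mathsf{Influenced}[p,r-1]\cup\{v: |N(v)\cap \mathsf{Influenced}[p,r-1]|\ge t(v)-p(v)\}$, where $N(v)$ is the neighbourhood of $v$ in $G$. A node is influenced by the end of round $r$ if it lies in $\mathsf{Influenced}[p,r]$. An incentive function $p:V_m\to\{0,1,2,\dots\}$ is $\ell$-optimal for $K_m$ if it has minimum cost among all incentive functions on $V_m$ for which the influence process in $K_m$ (with thresholds $t$ restricted to $V_m$) satisfies $\mathsf{Influenced}[p,\ell]=V_m$. *)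

theory Defs
  imports Main
begin

text \<open>Nodes v_1,...,v_n are represented by the naturals 1..n.  K_m is the complete
graph on V_m = {1..m}; the neighbourhood of v in K_m is {1..m} - {v}.
Thresholds t and incentives p are functions nat => nat (values outside V_m irrelevant).\<close>

definition Vm :: "nat \<Rightarrow> nat set" where
  "Vm m = {1..m}"

primrec influenced :: "(nat \<Rightarrow> nat) \<Rightarrow> nat \<Rightarrow> (nat \<Rightarrow> nat) \<Rightarrow> nat \<Rightarrow> nat set" where
  "influenced t m p 0 = {v \<in> Vm m. p v = t v}"
| "influenced t m p (Suc r) = influenced t m p r \<union>
     {v \<in> Vm m. card ((Vm m - {v}) \<inter> influenced t m p r) \<ge> t v - p v}"

definition is_incentive :: "(nat \<Rightarrow> nat) \<Rightarrow> nat \<Rightarrow> (nat \<Rightarrow> nat) \<Rightarrow> bool" where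
  "is_incentive t m p \<longleftrightarrow> (\<forall>v \<in> Vm m. p v \<le> t v)"

definition cost :: "nat \<Rightarrow> (nat \<Rightarrow> nat) \<Rightarrow> nat" where
  "cost m p = (\<Sum>v \<in> Vm m. p v)"

definition l_optimal :: "(nat \<Rightarrow> nat) \<Rightarrow> nat \<Rightarrow> nat \<Rightarrow> (nat \<Rightarrow> nat) \<Rightarrow> bool" where
  "l_optimal t m l p \<longleftrightarrow>
     is_incentive t m p \<and> influenced t m p l = Vm m \<and>
     (\<forall>q. is_incentive t m q \<and> influenced t m q l = Vm m \<longrightarrow> cost m p \<le> cost m q)"

end

theory Submission
  imports Defs
begin

text \<open>On a complete graph the influence process only sees the deficits t v - p v, and it
commutes with every relabelling of the nodes.  Let S be the set influenced after round l - 1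
under an optimal p, with card S = k.  Exchange the deficits of the nodes of {1..k} - S with
those of the equally many nodes of S - {1..k}.  A node outside S has a larger deficit than
any node of S, so the deficits moved onto {1..k} - S still fit under the thresholds; the
deficits moved onto S - {1..k} come from smaller nodes, whose thresholds are no larger by
monotonicity.  The cost, the sum of the thresholds minus the sum of the deficits, is
unchanged, and the relabelled process influences exactly the relabelled sets, so the new
incentive is again optimal and influences {1..k} after round l - 1.\<close>

lemma finite_Vm [simp]: "finite (Vm m)"
  by (simp add: Vm_def)

lemma influenced_subset_Vm: "influenced t m p r \<subseteq> Vm m"
  by (induction r) auto

lemma influenced_deficit_mono:
  assumes "w \<in> influenced t m p r" and "u \<in> Vm m" and "p u \<le> t u"
    and "t u - p u \<le> t w - p w"
  shows "u \<in> influenced t m p r"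
  using assms(1)
proof (induction r)
  case 0
  then show ?case using assms(2-4) by auto
next
  case (Suc r)
  let ?I = "influenced t m p r"
  show ?case
  proof (cases "w \<in> ?I \<or> u \<in> ?I")
    case True
    then show ?thesis using Suc.IH by auto
  next
    case False
    then have "t w - p w \<le> card ((Vm m - {w}) \<inter> ?I)"
      using Suc.prems by auto
    also have "\<dots> \<le> card ((Vm m - {u}) \<inter> ?I)"
      using False by (intro card_mono) auto
    finally show ?thesis using assms(2,4) by auto
  qed
qed

lemma influenced_relabel:
  assumes s: "bij_betw s (Vm m) (Vm m)"
    and p: "\<forall>v \<in> Vm m. p v \<le> t v" and q: "\<forall>v \<in> Vm m. q v \<le> t' v"
    and deficit: "\<forall>v \<in> Vm m. t' v - q v = t (s v) - p (s v)"
  shows "influenced t' m q r = {v \<in> Vm m. s v \<in> influenced t m p r}"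
proof (induction r)
  case 0
  have "q v = t' v \<longleftrightarrow> p (s v) = t (s v)" if "v \<in> Vm m" for v
    using that p q deficit bij_betwE[OF s] by (metis diff_is_0_eq le_antisym order_refl)
  then show ?case using bij_betwE[OF s] by auto
next
  case (Suc r)
  have s_into: "s v \<in> Vm m" if "v \<in> Vm m" for v
    using s that by (simp add: bij_betwE)
  have "card ((Vm m - {v}) \<inter> influenced t' m q r) = card ((Vm m - {s v}) \<inter> influenced t m p r)"
    if v: "v \<in> Vm m" for v
  proof -
    let ?X = "(Vm m - {v}) \<inter> influenced t' m q r"
    have "inj_on s ?X"
      using s by (auto simp: bij_betw_def intro: inj_on_subset)
    moreover have "s ` ?X = (Vm m - {s v}) \<inter> influenced t m p r"
      using s v Suc.IH influenced_subset_Vm[of t m p r]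
      by (auto simp: bij_betw_def inj_on_def)
    ultimately show ?thesis by (metis card_image)
  qed
  then show ?case
    using Suc.IH deficit s_into by auto
qed

lemma cost_relabel:
  assumes s: "bij_betw s (Vm m) (Vm m)"
    and p: "\<forall>v \<in> Vm m. p v \<le> t v" and q: "\<forall>v \<in> Vm m. q v \<le> t v"
    and deficit: "\<forall>v \<in> Vm m. t v - q v = t (s v) - p (s v)"
  shows "cost m q = cost m p"
proof -
  have "sum t (Vm m) - cost m q = (\<Sum>v \<in> Vm m. t v - q v)"
    using q by (simp add: cost_def sum_subtractf_nat)
  also have "\<dots> = (\<Sum>v \<in> Vm m. t (s v) - p (s v))"
    using deficit by simp
  also have "\<dots> = (\<Sum>v \<in> Vm m. t v - p v)"
    using sum.reindex_bij_betw[OF s, of "\<lambda>v. t v - p v"] by simp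
  also have "\<dots> = sum t (Vm m) - cost m p"
    using p by (simp add: cost_def sum_subtractf_nat)
  finally show ?thesis
    using p q unfolding cost_def by (metis diff_diff_cancel sum_mono)
qed

lemma l_optimal_relabel:
  assumes opt: "l_optimal t m l p"
    and s: "bij_betw s (Vm m) (Vm m)"
    and fits: "\<forall>v \<in> Vm m. t (s v) - p (s v) \<le> t v"
  defines "q \<equiv> \<lambda>v. t v - (t (s v) - p (s v))"
  shows "l_optimal t m l q"
    and "influenced t m q r = {v \<in> Vm m. s v \<in> influenced t m p r}"
proof -
  have p: "\<forall>v \<in> Vm m. p v \<le> t v"
    using opt by (simp add: l_optimal_def is_incentive_def)
  have q: "\<forall>v \<in> Vm m. q v \<le> t v"
    by (simp add: q_def)
  have deficit: "\<forall>v \<in> Vm m. t v - q v = t (s v) - p (s v)"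
    using fits by (simp add: q_def)
  note relabel = influenced_relabel[OF s p q deficit]
  then show "influenced t m q r = {v \<in> Vm m. s v \<in> influenced t m p r}" .
  have "influenced t m q l = Vm m"
    using relabel[of l] opt bij_betwE[OF s] by (auto simp: l_optimal_def)
  moreover have "cost m q = cost m p"
    by (rule cost_relabel[OF s p q deficit])
  ultimately show "l_optimal t m l q"
    using opt q by (simp add: l_optimal_def is_incentive_def)
qed

lemma obtain_exchange_permutation:
  assumes "finite A" and "finite B" and "A \<inter> B = {}" and "card A = card B"
    and "A \<union> B \<subseteq> V"
  obtains s where "bij_betw s V V" and "bij_betw s A B" and "bij_betw s B A"
    and "\<forall>v \<in> V - (A \<union> B). s v = v"
proof -
  obtain f where f: "bij_betw f A B"
    using assms(1,2,4) finite_same_card_bij by blast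
  define s where "s v = (if v \<in> A then f v else if v \<in> B then inv_into A f v else v)" for v
  have sA: "bij_betw s A B"
    using f by (rule bij_betw_cong[THEN iffD1, rotated]) (simp add: s_def)
  have sB: "bij_betw s B A"
    using bij_betw_inv_into[OF f]
    by (rule bij_betw_cong[THEN iffD1, rotated]) (use assms(3) in \<open>auto simp: s_def\<close>)
  have "bij_betw s (V - (A \<union> B)) (V - (A \<union> B))"
    by (rule bij_betw_cong[THEN iffD1, OF _ bij_betw_id]) (simp add: s_def)
  then have "bij_betw s ((A \<union> B) \<union> (V - (A \<union> B))) ((B \<union> A) \<union> (V - (A \<union> B)))"
    using sA sB assms(3) by (intro bij_betw_combine) auto
  moreover have "(A \<union> B) \<union> (V - (A \<union> B)) = V" "(B \<union> A) \<union> (V - (A \<union> B)) = V"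
    using assms(5) by auto
  ultimately have "bij_betw s V V"
    by simp
  then show ?thesis
    using that sA sB by (simp add: s_def)
qed

lemma l_optimal_exchange_onto_initial_segment:
  assumes opt: "l_optimal t m l p"
    and mono: "\<forall>i j. 1 \<le> i \<and> i \<le> j \<and> j \<le> m \<longrightarrow> t i \<le> t j"
    and card_S: "card (influenced t m p r) = k"
  shows "\<exists>q. l_optimal t m l q \<and> {1..k} \<subseteq> influenced t m q r"
proof -
  define S where "S = influenced t m p r"
  have S: "S \<subseteq> Vm m"
    by (simp add: S_def influenced_subset_Vm)
  then have k: "{1..k} \<subseteq> Vm m"
    using card_S card_mono[OF finite_Vm S] by (auto simp: S_def Vm_def)
  have "card ({1..k} - S) = card (S - {1..k})"
    using card_S finite_subset[OF S] by (intro antisym card_le_sym_Diff) (auto simp: S_def)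
  then obtain s where s: "bij_betw s (Vm m) (Vm m)"
    and out_to_in: "bij_betw s ({1..k} - S) (S - {1..k})"
    and in_to_out: "bij_betw s (S - {1..k}) ({1..k} - S)"
    and fixed: "\<forall>v \<in> Vm m - (({1..k} - S) \<union> (S - {1..k})). s v = v"
    using obtain_exchange_permutation[of "{1..k} - S" "S - {1..k}" "Vm m"] S k
      finite_subset[OF S] by auto
  have p: "\<forall>v \<in> Vm m. p v \<le> t v"
    using opt by (simp add: l_optimal_def is_incentive_def)
  have fits: "t (s v) - p (s v) \<le> t v" if v: "v \<in> Vm m" for v
  proof -
    consider "v \<in> {1..k} - S" | "v \<in> S - {1..k}" | "s v = v"
      using fixed v by blast
    then show ?thesis
    proof cases
      case 1
      then have "s v \<in> S" using bij_betwE[OF out_to_in] by blast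
      then show ?thesis
        using 1 v p influenced_deficit_mono[of "s v" t m p r v] by (force simp: S_def)
    next
      case 2
      then have "s v \<in> {1..k}" "k < v" "v \<le> m"
        using bij_betwE[OF in_to_out] v by (auto simp: Vm_def)
      then show ?thesis using mono by (metis atLeastAtMost_iff diff_le_self le_trans less_imp_le)
    qed simp
  qed
  have into_S: "s v \<in> S" if "v \<in> {1..k}" for v
    using that k bij_betwE[OF out_to_in] fixed by (cases "v \<in> S") (auto simp: subset_iff)
  let ?q = "\<lambda>v. t v - (t (s v) - p (s v))"
  have "l_optimal t m l ?q" and "{1..k} \<subseteq> influenced t m ?q r"
    using l_optimal_relabel[OF opt s] fits into_S k by (auto simp: S_def)
  then show ?thesis by blast
qed

text \<open>The exchange works in every round and for any thresholds monotone on V_m.\<close>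

theorem lemma6:
  fixes n m k lam l :: nat and t :: "nat \<Rightarrow> nat"
  assumes "\<forall>v \<in> {1..n}. 1 \<le> t v \<and> t v \<le> n - 1"
    and "1 \<le> m" and "m \<le> n"
    and "\<forall>i j. 1 \<le> i \<and> i \<le> j \<and> j \<le> m \<longrightarrow> t i \<le> t j"
    and "1 \<le> lam" and "1 \<le> l" and "l \<le> lam"
    and "\<exists>p. l_optimal t m l p \<and> card (influenced t m p (l - 1)) = k"
    and "k < m"
  shows "\<exists>p. l_optimal t m l p \<and> {1..k} \<subseteq> influenced t m p (l - 1)"
proof -
  obtain p where "l_optimal t m l p" and "card (influenced t m p (l - 1)) = k"
    using assms(8) by blast
  then show ?thesis
    using l_optimal_exchange_onto_initial_segment assms(4) by blast
qed

end
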